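(* Consider the cone percolation process on $\mathbb{T}_d$ ($d\ge2$) with radius of influence distributed as $R$. Let $\rho$ be the smallest non-negative root of $\mathbb{E}(\rho^{d^R}) + (1-\rho)p_0 = \rho$, and let $\psi$ be the smallest non-negative root of $\mathbb{E}\big(\psi^{\frac{d}{d-1}(d^R-1)}\big) = \psi$. Then $$1-\Big(1-\rho^{\frac{d+1}{d}}\Big)p_0 - \mathbb{E}\Big(\rho^{\frac{d+1}{d}d^R}\Big) \;\le\; \mathbb{P}[V] \;\le\; 1-\mathbb{E}\Big(\psi^{\frac{d+1}{d-1}(d^R-1)}\Big).$$
   Context: Let $d\ge 2$ and let $\mathbb{T}_d$ be the infinite tree in which every vertex has exactly $d+1$ neighbours. Fix a vertex $\mathcal{O}$ (the origin); $d(u,v)$ denotes graph distance. Write $u\le v$ if $u$ lies on the path from $\mathcal{O}$ to $v$ (so $\mathcal{O}\le v$ for all $v$). Fix a neighbour $w$ of $\mathcal{O}$ and let $\mathbb{T}_d^+$ be the subtree obtained by deleting all vertices $x$ with $w\le x$; in $\mathbb{T}_d^+$ every vertex $u$ has exactly $d$ neighbours $x$ with $u\le x$ (its children). Let $R$ be a random variable with values in $\{0,1,2,\dots\}$, $p_k=\mathbb{P}(R=k)$, and assume $p_0\in(0,1)$. Cone percolation on $G\in\{\mathbb{T}_d,\mathbb{T}_d^+\}$: to each vertex $u$ of $G$ attach an independent copy $R_u$ of $R$; let $B_u=\{v\in G: u\le v,\ d(u,v)\le R_u\}$; set $I_0=\{\mathcal{O}\}$, $I_{n+1}=\bigcup_{u\in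 I_n}B_u$ for $n\ge0$, $I=\bigcup_{n\ge0}I_n$, and let $V$ be the event $\{|I|=\infty\}$ (survival). $\mathbb{P}_+$ and $\mathbb{P}$ denote the probability measures of the process on $\mathbb{T}_d^+$ and on $\mathbb{T}_d$ respectively. Convention: $x^0=1$ for all $x\ge0$. *)

theory Defs
  imports "HOL-Probability.Probability" "HOL-Library.Sublist"
begin

text \<open>Vertices of the (d+1)-regular tree T_d, rooted at the origin O = [].
  A vertex is the list of child indices along the path from O: the origin has
  d+1 children (indices < d+1), every other vertex has d children (indices < d).
  u \<le> v in the paper's sense is exactly prefix u v, and for u \<le> v the graph
  distance is length v - length u.\<close>

definition tree_vertex :: "nat \<Rightarrow> nat list \<Rightarrow> bool" where
  "tree_vertex d v = (case v of [] \<Rightarrow> True | a # w \<Rightarrow> a < d + 1 \<and> (\<forall>x\<in>set w. x < d))"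

definition tree_vertices :: "nat \<Rightarrow> nat list set" where
  "tree_vertices d = {v. tree_vertex d v}"

definition cone_ball :: "nat \<Rightarrow> (nat list \<Rightarrow> nat) \<Rightarrow> nat list \<Rightarrow> nat list set" where
  "cone_ball d r u = {v \<in> tree_vertices d. prefix u v \<and> length v - length u \<le> r u}"

primrec cone_I :: "nat \<Rightarrow> (nat list \<Rightarrow> nat) \<Rightarrow> nat \<Rightarrow> nat list set" where
  "cone_I d r 0 = {[]}"
| "cone_I d r (Suc n) = (\<Union>u\<in>cone_I d r n. cone_ball d r u)"

definition cone_infected :: "nat \<Rightarrow> (nat list \<Rightarrow> nat) \<Rightarrow> nat list set" where
  "cone_infected d r = (\<Union>n. cone_I d r n)"

definition cone_measure :: "nat \<Rightarrow> nat pmf \<Rightarrow> (nat list \<Rightarrow> nat) measure" where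
  "cone_measure d p = PiM (tree_vertices d) (\<lambda>_. measure_pmf p)"

definition survival :: "nat \<Rightarrow> nat pmf \<Rightarrow> (nat list \<Rightarrow> nat) set" where
  "survival d p = {r \<in> space (cone_measure d p). infinite (cone_infected d r)}"

text \<open>Real power with the convention x^0 = 1 for all x \<ge> 0.\<close>
definition pw :: "real \<Rightarrow> real \<Rightarrow> real" where
  "pw x a = (if a = 0 then 1 else x powr a)"

end

theory Submission
  imports Defs
begin

text \<open>
  Walking down the path from the origin to a vertex v we carry a
  budget: the largest remaining radius of a cone covering the current vertex.  At a
  vertex w the budget becomes max b (R w); the step to a child is covered iff this is
  at least 1, and the child inherits the budget decreased by one.  Then v is infected
  iff every step of its path is covered, so (each level of the tree being finite)
  the process survives iff infection paths of every length exist.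

  By independence of the radius at w and the configurations in the d disjoint child
  subtrees, the probability that no infection path of length n starts at a non-root
  vertex with budget b obeys the recursion
    f (n+1) b = E [if max b R = 0 then 1 else f n (max b R - 1) ^ d],
  and at the root the same holds with d+1 children.  The f n b increase to extinction
  probabilities q b solving the fixed-point version of this recursion, and
  1 - P[V] = E [if R = 0 then 1 else q (R-1) ^ (d+1)].
  The lower bound on P[V] follows from f n b \<le> \<rho>^(d^b) (induction on n).  For the
  upper bound the fixed-point equation yields q 0 * q (b-1) ^ d \<le> q b, hence
  q b \<ge> q 0 ^ (1 + d + ... + d^b); so the map whose least fixed point is \<psi> sends q 0
  below itself, its iterates from 0 converge to a fixed point below q 0, and \<psi> \<le> q 0.
  The file follows this order: expectations under a pmf, infection paths, the
  probabilistic recursion, its analysis, and finally the two bounds.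
\<close>

section \<open>Expectations of bounded functions under a pmf\<close>

lemma pmf_integrable_bounded:
  fixes f :: "'a \<Rightarrow> real"
  assumes "\<And>k. \<bar>f k\<bar> \<le> B"
  shows "integrable (measure_pmf p) f"
  by (rule measure_pmf.integrable_const_bound[where B=B]) (use assms in auto)

lemma pmf_expectation_tendsto:
  fixes f :: "nat \<Rightarrow> 'a \<Rightarrow> real"
  assumes "\<And>n k. \<bar>f n k\<bar> \<le> B" and "\<And>k. (\<lambda>n. f n k) \<longlonglongrightarrow> g k"
  shows "(\<lambda>n. measure_pmf.expectation p (f n)) \<longlonglongrightarrow> measure_pmf.expectation p g"
  by (rule integral_dominated_convergence[where w="\<lambda>_. B"]) (use assms in auto)

lemma pmf_expectation_sums:
  fixes g :: "nat \<Rightarrow> real"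
  assumes g: "\<And>k. \<bar>g k\<bar> \<le> B"
  shows "(\<lambda>k. pmf p k * g k) sums measure_pmf.expectation p g"
proof -
  have B: "0 \<le> B" using g[of 0] by simp
  have partial: "measure_pmf.expectation p (\<lambda>k. g k * indicator {..<N} k) = (\<Sum>k<N. pmf p k * g k)" for N
    by (subst integral_measure_pmf_real[of "{..<N}"]) (auto simp: indicator_def mult.commute)
  have "(\<lambda>N. measure_pmf.expectation p (\<lambda>k. g k * indicator {..<N} k)) \<longlonglongrightarrow> measure_pmf.expectation p g"
  proof (rule pmf_expectation_tendsto[where B=B])
    show "\<bar>g k * indicator {..<N} k\<bar> \<le> B" for N k using g[of k] B by (auto simp: indicator_def)
    fix k
    have "\<forall>\<^sub>F N in sequentially. g k * indicator {..<N} k = g k"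
      by (rule eventually_sequentiallyI[of "Suc k"]) (auto simp: indicator_def)
    then show "(\<lambda>N. g k * indicator {..<N} k) \<longlonglongrightarrow> g k" by (rule tendsto_eventually)
  qed
  then show ?thesis unfolding sums_def partial .
qed

lemma pmf_expectation_mono:
  fixes f g :: "'a \<Rightarrow> real"
  assumes "\<And>k. f k \<le> g k" "\<And>k. \<bar>f k\<bar> \<le> B" "\<And>k. \<bar>g k\<bar> \<le> B"
  shows "measure_pmf.expectation p f \<le> measure_pmf.expectation p g"
  by (rule integral_mono) (use assms in \<open>auto intro: pmf_integrable_bounded[where B=B]\<close>)

lemma pmf_expectation_unit_interval:
  fixes f :: "'a \<Rightarrow> real"
  assumes "\<And>k. 0 \<le> f k" "\<And>k. f k \<le> 1"
  shows "0 \<le> measure_pmf.expectation p f \<and> measure_pmf.expectation p f \<le> 1"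
proof
  show "0 \<le> measure_pmf.expectation p f" by (rule Bochner_Integration.integral_nonneg) (use assms in auto)
  have "measure_pmf.expectation p f \<le> measure_pmf.expectation p (\<lambda>_. 1)"
    by (rule pmf_expectation_mono[where B=1]) (use assms in auto)
  then show "measure_pmf.expectation p f \<le> 1" by simp
qed

lemma pmf_expectation_change_at:
  fixes f :: "'a \<Rightarrow> real"
  assumes f: "\<And>k. \<bar>f k\<bar> \<le> B"
  shows "measure_pmf.expectation p (\<lambda>k. if k = j then a else f k)
       = measure_pmf.expectation p (\<lambda>k. if k = j then b else f k) + (a - b) * pmf p j"
proof -
  have "(\<lambda>k. if k = j then a else f k) = (\<lambda>k. (if k = j then b else f k) + (a - b) * indicator {j} k)"
    by (auto simp: indicator_def)
  moreover have "integrable (measure_pmf p) (\<lambda>k. if k = j then b else f k)"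
    by (rule pmf_integrable_bounded[where B="max B \<bar>b\<bar>"]) (use f in \<open>auto simp: le_max_iff_disj\<close>)
  moreover have "integrable (measure_pmf p) (\<lambda>k. (a - b) * indicator {j} k)"
    by (rule pmf_integrable_bounded[where B="\<bar>a - b\<bar>"]) (auto simp: indicator_def)
  ultimately show ?thesis by (simp add: measure_pmf_single)
qed

section \<open>Infection paths\<close>

definition child_count :: "nat \<Rightarrow> nat list \<Rightarrow> nat" where
  "child_count d w = (if w = [] then Suc d else d)"

primrec infection_path ::
    "nat \<Rightarrow> nat \<Rightarrow> nat list \<Rightarrow> nat list \<Rightarrow> (nat list \<Rightarrow> nat) \<Rightarrow> bool" where
  "infection_path d b w [] r = True"
| "infection_path d b w (c # x) r =
     (1 \<le> max b (r w) \<and> c < child_count d w \<and> infection_path d (max b (r w) - 1) (w @ [c]) x r)"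

primrec path_budget :: "nat \<Rightarrow> nat \<Rightarrow> nat list \<Rightarrow> nat list \<Rightarrow> (nat list \<Rightarrow> nat) \<Rightarrow> nat" where
  "path_budget d b w [] r = b"
| "path_budget d b w (c # x) r = path_budget d (max b (r w) - 1) (w @ [c]) x r"

text \<open>Unlike the existential
  form, this recursive form only inspects the finitely many vertices within
  distance n of w, which makes it measurable.\<close>
primrec reaches :: "nat \<Rightarrow> nat \<Rightarrow> nat \<Rightarrow> nat list \<Rightarrow> (nat list \<Rightarrow> nat) \<Rightarrow> bool" where
  "reaches d 0 b w r = True"
| "reaches d (Suc n) b w r =
     (1 \<le> max b (r w) \<and> (\<exists>c<child_count d w. reaches d n (max b (r w) - 1) (w @ [c]) r))"

lemma reaches_iff_path: "reaches d n b w r \<longleftrightarrow> (\<exists>x. length x = n \<and> infection_path d b w x r)"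
proof (induction n arbitrary: b w)
  case (Suc n)
  show ?case
  proof
    assume "reaches d (Suc n) b w r"
    then obtain c x where "1 \<le> max b (r w)" "c < child_count d w" "length x = n"
        "infection_path d (max b (r w) - 1) (w @ [c]) x r"
      using Suc by auto
    then show "\<exists>x. length x = Suc n \<and> infection_path d b w x r" by (intro exI[of _ "c # x"]) auto
  next
    assume "\<exists>x. length x = Suc n \<and> infection_path d b w x r"
    then obtain x where "length x = Suc n" "infection_path d b w x r" by auto
    then show "reaches d (Suc n) b w r" using Suc by (cases x) auto
  qed
qed simp

lemma infection_path_append:
  "infection_path d b w (y @ z) r \<longleftrightarrow>
     infection_path d b w y r \<and> infection_path d (path_budget d b w y r) (w @ y) z r"
  by (induction y arbitrary: b w) auto

lemma reaches_if_path:
  assumes "infection_path d b w x r" "n \<le> length x"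
  shows "reaches d n b w r"
proof -
  have "infection_path d b w (take n x @ drop n x) r" using assms(1) by simp
  then have "infection_path d b w (take n x) r" by (simp only: infection_path_append)
  then show ?thesis using assms(2) by (auto simp: reaches_iff_path intro!: exI[of _ "take n x"])
qed

lemma reaches_Suc_imp: "reaches d (Suc n) b w r \<Longrightarrow> reaches d n b w r"
proof -
  assume "reaches d (Suc n) b w r"
  then obtain x where "length x = Suc n" "infection_path d b w x r" by (auto simp: reaches_iff_path)
  then show ?thesis by (intro reaches_if_path[of d b w x]) simp_all
qed

lemma tree_vertex_Nil [simp]: "tree_vertex d []"
  by (simp add: tree_vertex_def)

lemma tree_vertex_snoc: "tree_vertex d (w @ [c]) \<longleftrightarrow> tree_vertex d w \<and> c < child_count d w"
  by (cases w) (auto simp: tree_vertex_def child_count_def)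

lemma tree_vertex_appendD: "tree_vertex d (w @ x) \<Longrightarrow> tree_vertex d w"
  by (induction x rule: rev_induct) (auto simp: tree_vertex_snoc simp flip: append_assoc)

lemma infection_path_tree_vertex:
  "infection_path d b w x r \<Longrightarrow> tree_vertex d w \<Longrightarrow> tree_vertex d (w @ x)"
proof (induction x arbitrary: b w)
  case (Cons c x)
  then have "tree_vertex d (w @ [c])" by (auto simp: tree_vertex_snoc)
  with Cons show ?case by fastforce
qed simp

lemma infection_path_within_radius:
  "tree_vertex d (u @ z) \<Longrightarrow> length z \<le> max b (r u) \<Longrightarrow> infection_path d b u z r"
proof (induction z arbitrary: b u)
  case (Cons c z)
  have tv: "tree_vertex d ((u @ [c]) @ z)" using Cons by simp
  then have "c < child_count d u" using tree_vertex_appendD tree_vertex_snoc by blast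
  moreover have "length z \<le> max (max b (r u) - 1) (r (u @ [c]))"
    using Cons.prems(2) by simp
  then have "infection_path d (max b (r u) - 1) (u @ [c]) z r"
    using tv by (intro Cons.IH) simp_all
  moreover have "1 \<le> max b (r u)" using Cons.prems(2) by simp
  ultimately show ?case by simp
qed simp

lemma cone_I_infection_path: "v \<in> cone_I d r n \<Longrightarrow> infection_path d 0 [] v r"
proof (induction n arbitrary: v)
  case (Suc n)
  then obtain u where u: "u \<in> cone_I d r n" "v \<in> cone_ball d r u" by auto
  then obtain z where z: "v = u @ z" "length z \<le> r u" "tree_vertex d (u @ z)"
    by (auto simp: cone_ball_def prefix_def tree_vertices_def)
  have "infection_path d (path_budget d 0 [] u r) ([] @ u) z r"
    using z by (intro infection_path_within_radius) auto
  with Suc.IH[OF u(1)] show ?case using z by (simp add: infection_path_append)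
qed simp

lemma Nil_infected: "[] \<in> cone_infected d r"
  unfolding cone_infected_def by (auto intro!: exI[of _ 0])

lemma cone_infected_ball: "u \<in> cone_infected d r \<Longrightarrow> v \<in> cone_ball d r u \<Longrightarrow> v \<in> cone_infected d r"
proof -
  assume "u \<in> cone_infected d r" "v \<in> cone_ball d r u"
  then obtain n where "u \<in> cone_I d r n" by (auto simp: cone_infected_def)
  then have "v \<in> cone_I d r (Suc n)" using \<open>v \<in> cone_ball d r u\<close> by auto
  then show ?thesis unfolding cone_infected_def by blast
qed

text \<open>Converse direction: an infection path from an infected vertex w stays infected,
  provided the budget b of w is witnessed by an infected ancestor u whose cone still
  covers b further steps below w.\<close>
lemma infection_path_infected:
  assumes "infection_path d b w x r" "tree_vertex d w" "w \<in> cone_infected d r"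
    "b = 0 \<or> (\<exists>u\<in>cone_infected d r. prefix u w \<and> length w - length u + b \<le> r u)"
  shows "w @ x \<in> cone_infected d r"
  using assms
proof (induction x arbitrary: b w)
  case (Cons c x)
  let ?m = "max b (r w)"
  have m1: "1 \<le> ?m" and c: "c < child_count d w"
    and path: "infection_path d (?m - 1) (w @ [c]) x r" using Cons.prems by auto
  have tv: "tree_vertex d (w @ [c])" using c Cons.prems by (simp add: tree_vertex_snoc)
  have "w @ [c] \<in> cone_infected d r \<and>
    (\<exists>u\<in>cone_infected d r. prefix u (w @ [c]) \<and> length (w @ [c]) - length u + (?m - 1) \<le> r u)"
  proof (cases "r w \<ge> b")
    case True
    then have "w @ [c] \<in> cone_ball d r w" using m1 tv by (auto simp: cone_ball_def tree_vertices_def)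
    then have "w @ [c] \<in> cone_infected d r" using Cons.prems(3) by (rule cone_infected_ball[rotated])
    then show ?thesis using True Cons.prems(3) m1 by (intro conjI bexI[of _ w]) auto
  next
    case False
    then have b: "b \<noteq> 0" "?m = b" by auto
    then obtain u where u: "u \<in> cone_infected d r" "prefix u w" "length w - length u + b \<le> r u"
      using Cons.prems(4) by auto
    have "length u \<le> length w" using u(2) prefix_length_le by blast
    then have "w @ [c] \<in> cone_ball d r u" using u tv b
      by (auto simp: cone_ball_def tree_vertices_def prefix_def)
    then have "w @ [c] \<in> cone_infected d r" using u(1) by (rule cone_infected_ball[rotated])
    then show ?thesis using u b \<open>length u \<le> length w\<close>
      by (intro conjI bexI[of _ u]) (auto simp: prefix_def)
  qed
  then have "(w @ [c]) @ x \<in> cone_infected d r"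
    using path tv by (intro Cons.IH[of "?m - 1"]) auto
  then show ?case by simp
qed simp

lemma cone_infected_eq: "cone_infected d r = {v. infection_path d 0 [] v r}"
proof (intro set_eqI iffI)
  fix v assume "v \<in> cone_infected d r"
  then show "v \<in> {v. infection_path d 0 [] v r}"
    by (auto simp: cone_infected_def intro: cone_I_infection_path)
next
  fix v assume "v \<in> {v. infection_path d 0 [] v r}"
  then show "v \<in> cone_infected d r"
    using infection_path_infected[of d 0 "[]" v r] Nil_infected by auto
qed

lemma finite_tree_ball: "finite {v. tree_vertex d v \<and> length v < n}"
proof (rule finite_subset)
  show "{v. tree_vertex d v \<and> length v < n} \<subseteq> {xs. set xs \<subseteq> {..d} \<and> length xs \<le> n}"
  proof
    fix v assume "v \<in> {v. tree_vertex d v \<and> length v < n}"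
    then have v: "tree_vertex d v" "length v < n" by auto
    have "set v \<subseteq> {..d}"
    proof (cases v)
      case (Cons a w) then show ?thesis using v by (auto simp: tree_vertex_def)
    qed simp
    then show "v \<in> {xs. set xs \<subseteq> {..d} \<and> length xs \<le> n}" using v by simp
  qed
  show "finite {xs. set xs \<subseteq> {..d} \<and> length xs \<le> n}" by (intro finite_lists_length_le) simp
qed

lemma infinite_iff_reaches: "infinite (cone_infected d r) \<longleftrightarrow> (\<forall>n. reaches d n 0 [] r)"
proof
  assume inf: "infinite (cone_infected d r)"
  show "\<forall>n. reaches d n 0 [] r"
  proof
    fix n
    have "\<not> cone_infected d r \<subseteq> {v. tree_vertex d v \<and> length v < n}"
      using inf finite_tree_ball finite_subset by blast
    then obtain v where v: "infection_path d 0 [] v r" "\<not> (tree_vertex d v \<and> length v < n)"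
      by (auto simp: cone_infected_eq)
    have "tree_vertex d v" using infection_path_tree_vertex[OF v(1)] by simp
    with v show "reaches d n 0 [] r" by (intro reaches_if_path[OF v(1)]) auto
  qed
next
  assume all: "\<forall>n. reaches d n 0 [] r"
  show "infinite (cone_infected d r)"
  proof
    assume fin: "finite (cone_infected d r)"
    obtain x where x: "length x = Suc (Max (length ` cone_infected d r))" "infection_path d 0 [] x r"
      using all reaches_iff_path by blast
    then have "x \<in> cone_infected d r" by (simp add: cone_infected_eq)
    then have "length x \<le> Max (length ` cone_infected d r)" using fin by simp
    then show False using x(1) by simp
  qed
qed

section \<open>The probability that no long infection path starts at a vertex\<close>

definition subtree :: "nat \<Rightarrow> nat list \<Rightarrow> nat list set" where
  "subtree d u = {v \<in> tree_vertices d. prefix u v}"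

lemma reaches_measurable:
  assumes "subtree d u \<subseteq> K" "tree_vertex d u"
  shows "Measurable.pred (PiM K (\<lambda>_. measure_pmf p)) (\<lambda>r. reaches d n b u r)"
  using assms
proof (induction n arbitrary: b u)
  case (Suc n)
  have uK: "u \<in> K" using Suc.prems by (auto simp: subtree_def tree_vertices_def)
  have radius: "(\<lambda>r. r u) \<in> measurable (PiM K (\<lambda>_. measure_pmf p)) (count_space UNIV)"
    using measurable_component_singleton[OF uK, of "\<lambda>_. measure_pmf p"] by simp
  have step: "Measurable.pred (PiM K (\<lambda>_. measure_pmf p))
      (\<lambda>r. 1 \<le> max b k \<and> (\<exists>c\<in>{..<child_count d u}. reaches d n (max b k - 1) (u @ [c]) r))" for k
  proof (intro pred_intros_conj1' pred_intros_finite(4))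
    fix c assume c: "c \<in> {..<child_count d u}"
    show "Measurable.pred (PiM K (\<lambda>_. measure_pmf p)) (\<lambda>r. reaches d n (max b k - 1) (u @ [c]) r)"
    proof (rule Suc.IH)
      show "tree_vertex d (u @ [c])" using c Suc.prems by (simp add: tree_vertex_snoc)
      show "subtree d (u @ [c]) \<subseteq> K"
        using Suc.prems(1) prefix_order.trans[of u "u @ [c]"] by (auto simp: subtree_def)
    qed
  qed simp
  have "Measurable.pred (PiM K (\<lambda>_. measure_pmf p))
      (\<lambda>r. (\<lambda>k r. 1 \<le> max b k \<and> (\<exists>c\<in>{..<child_count d u}. reaches d n (max b k - 1) (u @ [c]) r)) (r u) r)"
    by (rule measurable_compose_countable[OF step radius])
  then show ?case by (simp add: Bex_def)
next
  case 0
  have "reaches d 0 b u = (\<lambda>_. True)" by (rule ext) simp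
  then show ?case by simp
qed

lemma reaches_restrict:
  assumes "subtree d u \<subseteq> K" "tree_vertex d u"
  shows "reaches d n b u (restrict r K) = reaches d n b u r"
  using assms
proof (induction n arbitrary: b u)
  case (Suc n)
  have "u \<in> K" using Suc.prems by (auto simp: subtree_def tree_vertices_def)
  then have radius: "restrict r K u = r u" by simp
  have "reaches d n b' (u @ [c]) (restrict r K) = reaches d n b' (u @ [c]) r"
    if c: "c < child_count d u" for c b'
  proof (rule Suc.IH)
    show "tree_vertex d (u @ [c])" using c Suc.prems by (simp add: tree_vertex_snoc)
    show "subtree d (u @ [c]) \<subseteq> K"
      using Suc.prems(1) prefix_order.trans[of u "u @ [c]"] by (auto simp: subtree_def)
  qed
  then have "(\<exists>c<child_count d u. reaches d n b' (u @ [c]) (restrict r K))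
      = (\<exists>c<child_count d u. reaches d n b' (u @ [c]) r)" for b'
    by blast
  then show ?case by (simp only: reaches.simps radius)
qed simp

lemma prob_space_cone: "prob_space (cone_measure d p)"
  unfolding cone_measure_def by (rule prob_space_PiM) (simp add: prob_space_measure_pmf)

lemma indep_coords:
  "prob_space.indep_vars (cone_measure d p) (\<lambda>_. measure_pmf p) (\<lambda>i \<omega>. \<omega> i) (tree_vertices d)"
proof -
  interpret Q: prob_space "cone_measure d p" by (rule prob_space_cone)
  have ne: "tree_vertices d \<noteq> {}" by (auto simp: tree_vertices_def intro!: exI[of _ "[]"])
  show ?thesis
  proof (subst Q.indep_vars_iff_distr_eq_PiM'[OF ne])
    fix i :: "nat list" assume "i \<in> tree_vertices d"
    then show "(\<lambda>\<omega>. \<omega> i) \<in> measurable (cone_measure d p) (measure_pmf p)"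
      unfolding cone_measure_def by (rule measurable_component_singleton)
  next
    have "distr (cone_measure d p) (PiM (tree_vertices d) (\<lambda>_. measure_pmf p))
          (\<lambda>x. restrict (\<lambda>i. x i) (tree_vertices d))
        = distr (cone_measure d p) (cone_measure d p) (\<lambda>x. x)"
      unfolding cone_measure_def
    proof (rule distr_cong[OF refl refl])
      fix x assume "x \<in> space (PiM (tree_vertices d) (\<lambda>_. measure_pmf p))"
      then show "restrict (\<lambda>i. x i) (tree_vertices d) = x" by (simp add: space_PiM PiE_restrict)
    qed
    also have "\<dots> = cone_measure d p" by (rule distr_id2) auto
    also have "\<dots> = PiM (tree_vertices d) (\<lambda>i. distr (cone_measure d p) (measure_pmf p) (\<lambda>\<omega>. \<omega> i))"
      unfolding cone_measure_def
    proof (rule PiM_cong[OF refl])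
      fix x assume "x \<in> tree_vertices d"
      then show "measure_pmf p = distr (PiM (tree_vertices d) (\<lambda>_. measure_pmf p)) (measure_pmf p) (\<lambda>\<omega>. \<omega> x)"
        by (intro distr_PiM_component[symmetric]) (auto simp: prob_space_measure_pmf)
    qed
    finally show "distr (cone_measure d p) (PiM (tree_vertices d) (\<lambda>_. measure_pmf p))
          (\<lambda>x. restrict (\<lambda>i. x i) (tree_vertices d))
        = PiM (tree_vertices d) (\<lambda>i. distr (cone_measure d p) (measure_pmf p) (\<lambda>\<omega>. \<omega> i))" .
  qed
qed

lemma measure_radius:
  assumes w: "w \<in> tree_vertices d"
  shows "measure (cone_measure d p) {r\<in>space (cone_measure d p). r w = k} = pmf p k"
proof -
  interpret PP: product_prob_space "\<lambda>_::nat list. measure_pmf p" "tree_vertices d"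
    by (intro product_prob_spaceI prob_space_measure_pmf)
  have "emeasure (cone_measure d p) {r\<in>space (cone_measure d p). r w \<in> {k}} = emeasure (measure_pmf p) {k}"
    unfolding cone_measure_def by (rule PP.emeasure_PiM_Collect_single[OF w]) simp
  then show ?thesis by (simp add: measure_def emeasure_pmf_single)
qed

lemma subtree_event:
  fixes p :: "nat pmf" and n b :: nat
  assumes v: "tree_vertex d v"
  defines "E \<equiv> {x \<in> space (PiM (subtree d v) (\<lambda>_. measure_pmf p)). \<not> reaches d n b v x}"
  shows "E \<in> sets (PiM (subtree d v) (\<lambda>_. measure_pmf p))"
    and "(\<lambda>\<omega>. restrict (\<lambda>i. \<omega> i) (subtree d v)) -` E \<inter> space (cone_measure d p)
      = {r\<in>space (cone_measure d p). \<not> reaches d n b v r}"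
proof -
  have "Measurable.pred (PiM (subtree d v) (\<lambda>_. measure_pmf p)) (reaches d n b v)"
    using v by (intro reaches_measurable) auto
  then show "E \<in> sets (PiM (subtree d v) (\<lambda>_. measure_pmf p))"
    unfolding E_def pred_def by (rule sets.sets_Collect_neg)
  have "reaches d n b v (restrict r (subtree d v)) = reaches d n b v r" for r
    using v by (intro reaches_restrict) auto
  then show "(\<lambda>\<omega>. restrict (\<lambda>i. \<omega> i) (subtree d v)) -` E \<inter> space (cone_measure d p)
      = {r\<in>space (cone_measure d p). \<not> reaches d n b v r}"
    by (auto simp: E_def cone_measure_def space_PiM)
qed

text \<open>A vertex w (index None) and the subtrees of its children (index Some c) are
  pairwise disjoint blocks of vertices, hence carry independent radii.\<close>
definition local_block :: "nat \<Rightarrow> nat list \<Rightarrow> nat option \<Rightarrow> nat list set" where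
  "local_block d w j = (case j of None \<Rightarrow> {w} | Some c \<Rightarrow> subtree d (w @ [c]))"

lemma local_blocks_disjoint: "disjoint_family (local_block d w)"
proof (unfold disjoint_family_on_def, intro ballI impI)
  have not_below: "w \<notin> subtree d (w @ [c])" for c
    using prefix_length_le[of "w @ [c]" w] by (auto simp: subtree_def)
  have children: "subtree d (w @ [c]) \<inter> subtree d (w @ [c']) = {}" if "c \<noteq> c'" for c c'
  proof -
    have "\<not> (prefix (w @ [c]) v \<and> prefix (w @ [c']) v)" for v
      using that prefix_length_prefix[of "w @ [c]" v "w @ [c']"] by auto
    then show ?thesis by (auto simp: subtree_def)
  qed
  fix i j :: "nat option" assume "i \<noteq> j"
  then show "local_block d w i \<inter> local_block d w j = {}"
    using not_below children by (cases i; cases j) (auto simp: local_block_def)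
qed

lemma prob_radius_and_children_die:
  assumes w: "tree_vertex d w"
  shows "measure (cone_measure d p)
           {r\<in>space (cone_measure d p). r w = k \<and> (\<forall>c<child_count d w. \<not> reaches d n b (w @ [c]) r)}
       = pmf p k * (\<Prod>c<child_count d w.
           measure (cone_measure d p) {r\<in>space (cone_measure d p). \<not> reaches d n b (w @ [c]) r})"
proof -
  let ?M = "cone_measure d p"
  let ?K = "local_block d w"
  interpret Q: prob_space ?M by (rule prob_space_cone)
  define L where "L = insert None (Some ` {..<child_count d w})"
  define A where
    "A j = (case j of None \<Rightarrow> {x \<in> space (PiM {w} (\<lambda>_. measure_pmf p)). x w = k}
      | Some c \<Rightarrow> {x \<in> space (PiM (subtree d (w @ [c])) (\<lambda>_. measure_pmf p)). \<not> reaches d n b (w @ [c]) x})"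
    for j
  let ?F = "\<lambda>j. (\<lambda>\<omega>. restrict (\<lambda>i. \<omega> i) (?K j)) -` A j \<inter> space ?M"
  have wV: "w \<in> tree_vertices d" using w by (simp add: tree_vertices_def)
  have child: "tree_vertex d (w @ [c])" if "c < child_count d w" for c
    using that w by (simp add: tree_vertex_snoc)
  have ind: "Q.indep_vars (\<lambda>j. PiM (?K j) (\<lambda>_. measure_pmf p)) (\<lambda>j \<omega>. restrict (\<lambda>i. \<omega> i) (?K j)) L"
  proof (rule Q.indep_vars_restrict[OF indep_coords])
    show "?K j \<subseteq> tree_vertices d" if "j \<in> L" for j
      using that wV by (auto simp: local_block_def L_def subtree_def)
    show "disjoint_family_on ?K L" by (rule disjoint_family_on_mono[OF _ local_blocks_disjoint]) simp
  qed
  have A_sets: "A j \<in> sets (PiM (?K j) (\<lambda>_. measure_pmf p))" if "j \<in> L" for j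
  proof (cases j)
    case None
    have "{x \<in> space (PiM {w} (\<lambda>_. measure_pmf p)). x w \<in> {k}} \<in> sets (PiM {w} (\<lambda>_. measure_pmf p))"
      by (rule sets_Collect_single) simp_all
    then show ?thesis using None by (simp add: A_def local_block_def)
  next
    case (Some c)
    then show ?thesis using that subtree_event(1)[OF child]
      by (auto simp: A_def local_block_def L_def)
  qed
  have L: "L \<noteq> {}" "finite L" by (auto simp: L_def)
  have indep: "Q.prob (\<Inter>j\<in>L. ?F j) = (\<Prod>j\<in>L. Q.prob (?F j))"
    by (rule Q.indep_varsD[OF ind L order_refl A_sets])
  have F_None: "?F None = {r\<in>space ?M. r w = k}"
    by (auto simp: local_block_def A_def space_PiM)
  have F_Some: "?F (Some c) = {r\<in>space ?M. \<not> reaches d n b (w @ [c]) r}"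
    if "c < child_count d w" for c
    using subtree_event(2)[OF child[OF that]] by (simp add: local_block_def A_def)
  have "(\<Inter>j\<in>L. ?F j) = ?F None \<inter> (\<Inter>c\<in>{..<child_count d w}. ?F (Some c))"
    by (simp add: L_def)
  also have "\<dots> = {r\<in>space ?M. r w = k} \<inter>
      (\<Inter>c\<in>{..<child_count d w}. {r\<in>space ?M. \<not> reaches d n b (w @ [c]) r})"
    by (simp add: F_None F_Some)
  also have "\<dots> = {r\<in>space ?M. r w = k \<and> (\<forall>c<child_count d w. \<not> reaches d n b (w @ [c]) r)}"
    by auto
  finally have "(\<Inter>j\<in>L. ?F j)
      = {r\<in>space ?M. r w = k \<and> (\<forall>c<child_count d w. \<not> reaches d n b (w @ [c]) r)}" .
  moreover have "(\<Prod>j\<in>L. Q.prob (?F j))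
      = pmf p k * (\<Prod>c<child_count d w. Q.prob {r\<in>space ?M. \<not> reaches d n b (w @ [c]) r})"
    by (simp add: L_def prod.reindex F_None F_Some measure_radius[OF wV])
  ultimately show ?thesis using indep by simp
qed

text \<open>die_prob d p n b is the probability that no infection path of length n starts at
  a non-root vertex receiving budget b (see measure_die_prob).\<close>
fun die_prob :: "nat \<Rightarrow> nat pmf \<Rightarrow> nat \<Rightarrow> nat \<Rightarrow> real" where
  "die_prob d p 0 b = 0"
| "die_prob d p (Suc n) b =
     measure_pmf.expectation p (\<lambda>k. if max b k = 0 then 1 else die_prob d p n (max b k - 1) ^ d)"

lemma die_prob_01: "0 \<le> die_prob d p n b \<and> die_prob d p n b \<le> 1"
proof (induction n arbitrary: b)
  case (Suc n)
  show ?case unfolding die_prob.simps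
    by (rule pmf_expectation_unit_interval) (use Suc in \<open>auto intro: power_le_one\<close>)
qed simp

lemma children_die_measurable:
  assumes w: "tree_vertex d w"
  shows "Measurable.pred (cone_measure d p)
    (\<lambda>r. \<forall>c\<in>{..<child_count d w}. \<not> reaches d n b (w @ [c]) r)"
proof (intro pred_intros_finite(3) pred_intros_logic(2))
  fix c assume "c \<in> {..<child_count d w}"
  then show "Measurable.pred (cone_measure d p) (\<lambda>r. reaches d n b (w @ [c]) r)"
    unfolding cone_measure_def
    by (intro reaches_measurable) (use w in \<open>auto simp: subtree_def tree_vertex_snoc\<close>)
qed simp

text \<open>One step of the recursion: split according to the radius k at w; given k, the d
  (or d+1) child subtrees must all fail to carry a path of length n.\<close>
lemma prob_not_reaches_step:
  fixes q :: "nat \<Rightarrow> real"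
  assumes w: "tree_vertex d w" and q: "\<And>b. 0 \<le> q b \<and> q b \<le> 1"
    and children: "\<And>c b'. c < child_count d w \<Longrightarrow>
       measure (cone_measure d p) {r\<in>space (cone_measure d p). \<not> reaches d n b' (w @ [c]) r} = q b'"
  shows "measure (cone_measure d p) {r\<in>space (cone_measure d p). \<not> reaches d (Suc n) b w r}
     = measure_pmf.expectation p (\<lambda>k. if max b k = 0 then 1 else q (max b k - 1) ^ child_count d w)"
proof -
  let ?M = "cone_measure d p"
  let ?g = "\<lambda>k. if max b k = 0 then 1 else q (max b k - 1) ^ child_count d w"
  interpret Q: prob_space ?M by (rule prob_space_cone)
  define A where "A k = {r\<in>space ?M. r w = k \<and>
      (max b k = 0 \<or> (\<forall>c<child_count d w. \<not> reaches d n (max b k - 1) (w @ [c]) r))}" for k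
  have wV: "w \<in> tree_vertices d" using w by (simp add: tree_vertices_def)
  have A_sets: "A k \<in> sets ?M" for k
  proof -
    have "Measurable.pred ?M (\<lambda>r. r w = k)"
      unfolding cone_measure_def using wV by measurable
    then have "Measurable.pred ?M (\<lambda>r. r w = k \<and>
        (max b k = 0 \<or> (\<forall>c\<in>{..<child_count d w}. \<not> reaches d n (max b k - 1) (w @ [c]) r)))"
      using children_die_measurable[OF w] by measurable
    then show ?thesis by (simp only: A_def pred_def lessThan_iff Ball_def)
  qed
  have measure_A: "measure ?M (A k) = pmf p k * ?g k" for k
  proof (cases "max b k = 0")
    case True
    then have "A k = {r\<in>space ?M. r w = k}" by (auto simp: A_def)
    then show ?thesis using True measure_radius[OF wV] by simp
  next
    case False
    then have "A k = {r\<in>space ?M. r w = k \<and> (\<forall>c<child_count d w. \<not> reaches d n (max b k - 1) (w @ [c]) r)}"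
      by (auto simp: A_def)
    then have "measure ?M (A k) = pmf p k * (\<Prod>c<child_count d w.
        measure ?M {r\<in>space ?M. \<not> reaches d n (max b k - 1) (w @ [c]) r})"
      using prob_radius_and_children_die[OF w] by simp
    also have "\<dots> = pmf p k * (\<Prod>c<child_count d w. q (max b k - 1))"
      using children by simp
    finally show ?thesis by (simp only: if_not_P[OF False] prod_constant card_lessThan)
  qed
  have "(\<lambda>k. measure ?M (A k)) sums measure ?M (\<Union>k. A k)"
    by (rule Q.finite_measure_UNION) (use A_sets in \<open>auto simp: disjoint_family_on_def A_def\<close>)
  then have sums_event: "(\<lambda>k. pmf p k * ?g k) sums measure ?M (\<Union>k. A k)"
    by (simp only: measure_A)
  have sums_expectation: "(\<lambda>k. pmf p k * ?g k) sums measure_pmf.expectation p ?g"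
    by (rule pmf_expectation_sums[where B=1]) (use q in \<open>auto intro: power_le_one\<close>)
  have "{r\<in>space ?M. \<not> reaches d (Suc n) b w r} = (\<Union>k. A k)"
    by (auto simp: A_def not_le)
  then show ?thesis using sums_unique2[OF sums_event sums_expectation] by simp
qed

lemma measure_die_prob:
  assumes "tree_vertex d w" "w \<noteq> []"
  shows "measure (cone_measure d p) {r\<in>space (cone_measure d p). \<not> reaches d n b w r} = die_prob d p n b"
  using assms
proof (induction n arbitrary: w b)
  case (Suc n)
  have d: "child_count d w = d" using Suc.prems by (simp add: child_count_def)
  have "measure (cone_measure d p) {r\<in>space (cone_measure d p). \<not> reaches d (Suc n) b w r}
     = measure_pmf.expectation p (\<lambda>k. if max b k = 0 then 1 else die_prob d p n (max b k - 1) ^ d)"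
  proof (rule prob_not_reaches_step[OF Suc.prems(1), unfolded d])
    show "0 \<le> die_prob d p n b' \<and> die_prob d p n b' \<le> 1" for b' by (rule die_prob_01)
    fix c b' assume "c < d"
    then show "measure (cone_measure d p) {r\<in>space (cone_measure d p). \<not> reaches d n b' (w @ [c]) r}
        = die_prob d p n b'"
      using Suc.prems d by (intro Suc.IH) (auto simp: tree_vertex_snoc)
  qed
  then show ?case by (simp only: die_prob.simps)
qed simp

lemma measure_root:
  "measure (cone_measure d p) {r\<in>space (cone_measure d p). \<not> reaches d (Suc n) 0 [] r}
     = measure_pmf.expectation p (\<lambda>k. if k = 0 then 1 else die_prob d p n (k - 1) ^ Suc d)"
proof -
  have "measure (cone_measure d p) {r\<in>space (cone_measure d p). \<not> reaches d (Suc n) 0 [] r}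
     = measure_pmf.expectation p
         (\<lambda>k. if max 0 k = 0 then 1 else die_prob d p n (max 0 k - 1) ^ child_count d [])"
  proof (rule prob_not_reaches_step)
    show "0 \<le> die_prob d p n b' \<and> die_prob d p n b' \<le> 1" for b' by (rule die_prob_01)
    fix c b' assume "c < child_count d []"
    then show "measure (cone_measure d p) {r\<in>space (cone_measure d p). \<not> reaches d n b' ([] @ [c]) r}
        = die_prob d p n b'"
      using tree_vertex_snoc[of d "[]" c] by (intro measure_die_prob) auto
  qed simp
  moreover have "(\<lambda>k. if max 0 k = 0 then 1 else die_prob d p n (max 0 k - 1) ^ child_count d [])
      = (\<lambda>k. if k = 0 then 1 else die_prob d p n (k - 1) ^ Suc d)"
    by (rule ext) (simp add: child_count_def)
  ultimately show ?thesis by (simp only:)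
qed

definition dies_by :: "nat \<Rightarrow> nat pmf \<Rightarrow> nat \<Rightarrow> (nat list \<Rightarrow> nat) set" where
  "dies_by d p n = {r\<in>space (cone_measure d p). \<not> reaches d n 0 [] r}"

lemma dies_by_sets: "dies_by d p n \<in> sets (cone_measure d p)"
proof -
  have "Measurable.pred (cone_measure d p) (\<lambda>r. reaches d n 0 [] r)"
    unfolding cone_measure_def by (rule reaches_measurable) (auto simp: subtree_def)
  then show ?thesis unfolding dies_by_def pred_def by (rule sets.sets_Collect_neg)
qed

lemma survival_eq: "survival d p = space (cone_measure d p) - (\<Union>n. dies_by d p n)"
  by (auto simp: survival_def dies_by_def infinite_iff_reaches)

lemma dies_by_incseq: "incseq (dies_by d p)"
proof (rule incseq_SucI)
  show "dies_by d p n \<subseteq> dies_by d p (Suc n)" for n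
    unfolding dies_by_def using reaches_Suc_imp[of d n 0 "[]"] by blast
qed

lemma death_prob_limit:
  "(\<lambda>n. measure_pmf.expectation p (\<lambda>k. if k = 0 then 1 else die_prob d p n (k - 1) ^ Suc d))
     \<longlonglongrightarrow> 1 - measure (cone_measure d p) (survival d p)"
proof -
  interpret Q: prob_space "cone_measure d p" by (rule prob_space_cone)
  have "(\<lambda>n. measure (cone_measure d p) (dies_by d p n))
      \<longlonglongrightarrow> measure (cone_measure d p) (\<Union>n. dies_by d p n)"
    by (rule Q.finite_Lim_measure_incseq) (use dies_by_sets dies_by_incseq in auto)
  then have "(\<lambda>n. measure (cone_measure d p) (dies_by d p (Suc n)))
      \<longlonglongrightarrow> measure (cone_measure d p) (\<Union>n. dies_by d p n)"
    by (rule LIMSEQ_Suc)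
  moreover have "measure (cone_measure d p) (survival d p)
      = 1 - measure (cone_measure d p) (\<Union>n. dies_by d p n)"
    unfolding survival_eq using dies_by_sets by (intro Q.prob_compl) auto
  moreover have "measure (cone_measure d p) (dies_by d p (Suc n)) =
      measure_pmf.expectation p (\<lambda>k. if k = 0 then 1 else die_prob d p n (k - 1) ^ Suc d)" for n
    unfolding dies_by_def by (rule measure_root)
  ultimately show ?thesis by simp
qed

section \<open>Extinction probabilities\<close>

lemma die_prob_mono: "die_prob d p n b \<le> die_prob d p (Suc n) b"
proof (induction n arbitrary: b)
  case 0 then show ?case using die_prob_01[of d p "Suc 0" b] by simp
next
  case (Suc n)
  have unit: "0 \<le> die_prob d p m c" "die_prob d p m c \<le> 1" for m c using die_prob_01 by auto
  have "measure_pmf.expectation p (\<lambda>k. if max b k = 0 then 1 else die_prob d p n (max b k - 1) ^ d)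
     \<le> measure_pmf.expectation p (\<lambda>k. if max b k = 0 then 1 else die_prob d p (Suc n) (max b k - 1) ^ d)"
  proof (rule pmf_expectation_mono[where B=1])
    fix k
    show "(if max b k = 0 then 1 else die_prob d p n (max b k - 1) ^ d)
        \<le> (if max b k = 0 then 1 else die_prob d p (Suc n) (max b k - 1) ^ d)"
      using power_mono[OF Suc.IH[of "max b k - 1"] unit(1), of d] by (simp del: die_prob.simps)
    show "\<bar>if max b k = 0 then 1 else die_prob d p n (max b k - 1) ^ d\<bar> \<le> 1"
      using unit by (auto intro: power_le_one)
    show "\<bar>if max b k = 0 then 1 else die_prob d p (Suc n) (max b k - 1) ^ d\<bar> \<le> 1"
      using unit by (auto intro: power_le_one simp del: die_prob.simps)
  qed
  then show ?case by (simp only: die_prob.simps(2)[of d p n] die_prob.simps(2)[of d p "Suc n"])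
qed

text \<open>The probability q b that infection paths starting at a non-root vertex with budget
  b have bounded length, i.e. that the infection below it stays finite.\<close>
definition extinct_prob :: "nat \<Rightarrow> nat pmf \<Rightarrow> nat \<Rightarrow> real" where
  "extinct_prob d p b = (SUP n. die_prob d p n b)"

lemma die_prob_tendsto: "(\<lambda>n. die_prob d p n b) \<longlonglongrightarrow> extinct_prob d p b"
  unfolding extinct_prob_def
proof (rule LIMSEQ_incseq_SUP)
  show "bdd_above (range (\<lambda>n. die_prob d p n b))" using die_prob_01 by (intro bdd_aboveI[of _ 1]) auto
  show "incseq (\<lambda>n. die_prob d p n b)" by (rule incseq_SucI) (rule die_prob_mono)
qed

lemma extinct_prob_01: "0 \<le> extinct_prob d p b" "extinct_prob d p b \<le> 1"
proof -
  show "0 \<le> extinct_prob d p b" by (rule LIMSEQ_le_const[OF die_prob_tendsto]) (use die_prob_01 in auto)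
  show "extinct_prob d p b \<le> 1" by (rule LIMSEQ_le_const2[OF die_prob_tendsto]) (use die_prob_01 in auto)
qed

lemma extinct_prob_fixpoint:
  "extinct_prob d p b
     = measure_pmf.expectation p (\<lambda>k. if max b k = 0 then 1 else extinct_prob d p (max b k - 1) ^ d)"
proof -
  have "(\<lambda>n. die_prob d p (Suc n) b) \<longlonglongrightarrow> extinct_prob d p b" by (rule LIMSEQ_Suc[OF die_prob_tendsto])
  moreover have "(\<lambda>n. die_prob d p (Suc n) b)
      \<longlonglongrightarrow> measure_pmf.expectation p (\<lambda>k. if max b k = 0 then 1 else extinct_prob d p (max b k - 1) ^ d)"
    unfolding die_prob.simps
  proof (rule pmf_expectation_tendsto[where B=1])
    show "\<bar>if max b k = 0 then 1 else die_prob d p n (max b k - 1) ^ d\<bar> \<le> 1" for n k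
      using die_prob_01[of d p n] by (auto intro: power_le_one)
    show "(\<lambda>n. if max b k = 0 then 1 else die_prob d p n (max b k - 1) ^ d)
        \<longlonglongrightarrow> (if max b k = 0 then 1 else extinct_prob d p (max b k - 1) ^ d)" for k
      by (cases "max b k = 0") (auto intro: tendsto_power[OF die_prob_tendsto])
  qed
  ultimately show ?thesis by (rule LIMSEQ_unique)
qed

lemma extinct_prob_zero:
  "extinct_prob d p 0 = measure_pmf.expectation p (\<lambda>k. if k = 0 then 1 else extinct_prob d p (k - 1) ^ d)"
proof -
  have "(\<lambda>k. if max 0 k = 0 then 1 else extinct_prob d p (max 0 k - 1) ^ d)
      = (\<lambda>k. if k = 0 then 1 else extinct_prob d p (k - 1) ^ d)"
    by (rule ext) simp
  then show ?thesis using extinct_prob_fixpoint[of d p 0] by simp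
qed

text \<open>Comparing the fixed-point equations for budgets 0 and b pointwise in the radius k:
  for k \<le> b the integrand for budget b is the constant q (b-1)^d, otherwise both agree.\<close>
lemma extinct_prob_budget_step:
  assumes b: "1 \<le> b"
  shows "extinct_prob d p 0 * extinct_prob d p (b - 1) ^ d \<le> extinct_prob d p b"
proof -
  let ?q = "extinct_prob d p"
  let ?f = "\<lambda>k. if k = 0 then 1 else ?q (k - 1) ^ d"
  let ?c = "?q (b - 1) ^ d"
  have c: "0 \<le> ?c" "?c \<le> 1" using extinct_prob_01 by (auto intro: power_le_one)
  have f: "0 \<le> ?f k" "?f k \<le> 1" for k using extinct_prob_01 by (auto intro: power_le_one)
  have "?q 0 * ?c = measure_pmf.expectation p (\<lambda>k. ?f k * ?c)"
    unfolding extinct_prob_zero by simp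
  also have "\<dots> \<le> measure_pmf.expectation p (\<lambda>k. if max b k = 0 then 1 else ?q (max b k - 1) ^ d)"
  proof (rule pmf_expectation_mono[where B=1])
    fix k
    show "?f k * ?c \<le> (if max b k = 0 then 1 else ?q (max b k - 1) ^ d)"
    proof (cases "k \<le> b")
      case True
      then have "(if max b k = 0 then 1 else ?q (max b k - 1) ^ d) = ?c" using b by simp
      then show ?thesis using f c by (simp add: mult_left_le_one_le)
    next
      case False
      then have "(if max b k = 0 then 1 else ?q (max b k - 1) ^ d) = ?f k" by simp
      then show ?thesis using f[of k] c by (simp add: mult_right_le_one_le)
    qed
    show "\<bar>?f k * ?c\<bar> \<le> 1" using f[of k] c by (auto simp: abs_mult intro: mult_le_one)
    show "\<bar>if max b k = 0 then 1 else ?q (max b k - 1) ^ d\<bar> \<le> 1"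
      using extinct_prob_01 by (auto intro: power_le_one)
  qed
  also have "\<dots> = ?q b" by (rule extinct_prob_fixpoint[symmetric])
  finally show ?thesis .
qed

fun geom_sum :: "nat \<Rightarrow> nat \<Rightarrow> nat" where
  "geom_sum d 0 = 1"
| "geom_sum d (Suc j) = Suc (geom_sum d j * d)"

lemma geom_sum_real: "real (geom_sum d j) * (real d - 1) = real d ^ Suc j - 1"
proof (induction j)
  case (Suc j)
  have "real (geom_sum d (Suc j)) * (real d - 1) = (real d - 1) + real d * (real (geom_sum d j) * (real d - 1))"
    by (simp add: algebra_simps)
  also have "\<dots> = (real d - 1) + real d * (real d ^ Suc j - 1)" using Suc by simp
  also have "\<dots> = real d ^ Suc (Suc j) - 1" by (simp add: algebra_simps)
  finally show ?case .
qed simp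

lemma extinct_prob_geom_sum: "extinct_prob d p 0 ^ geom_sum d b \<le> extinct_prob d p b"
proof (induction b)
  case (Suc j)
  let ?q = "extinct_prob d p"
  have "?q 0 ^ geom_sum d (Suc j) = ?q 0 * (?q 0 ^ geom_sum d j) ^ d" by (simp add: power_mult)
  also have "\<dots> \<le> ?q 0 * ?q j ^ d"
    by (intro mult_left_mono power_mono Suc.IH) (use extinct_prob_01 in auto)
  also have "\<dots> \<le> ?q (Suc j)" using extinct_prob_budget_step[of "Suc j" d p] by simp
  finally show ?case .
qed simp

text \<open>Upper bound on the finite-depth death probabilities by the root \<rho> of
  E [if R = 0 then 1 else \<rho>^(d^R)] = \<rho>: each vertex has at least d children.\<close>
lemma die_prob_le_rho:
  assumes d: "1 \<le> d" and rho: "0 \<le> \<rho>" "\<rho> \<le> 1"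
    and root: "measure_pmf.expectation p (\<lambda>k. if k = 0 then 1 else \<rho> ^ (d ^ k)) = \<rho>"
  shows "die_prob d p n b \<le> \<rho> ^ (d ^ b)"
proof (induction n arbitrary: b)
  case 0 then show ?case using rho by simp
next
  case (Suc n)
  have unit: "0 \<le> die_prob d p n c" "die_prob d p n c \<le> 1" for c using die_prob_01 by auto
  have rho_pow: "0 \<le> \<rho> ^ m \<and> \<rho> ^ m \<le> 1" for m using rho by (auto intro: power_le_one)
  have step: "die_prob d p n (m - 1) ^ d \<le> \<rho> ^ (d ^ m)" if m1: "1 \<le> m" for m
  proof -
    have "die_prob d p n (m - 1) ^ d \<le> (\<rho> ^ (d ^ (m - 1))) ^ d"
      by (rule power_mono[OF Suc.IH unit(1)])
    also have "\<dots> = \<rho> ^ (d ^ m)"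
    proof -
      obtain j where m: "m = Suc j" using m1 by (cases m) auto
      show ?thesis by (simp only: m diff_Suc_1 power_Suc2 power_mult)
    qed
    finally show ?thesis .
  qed
  have bounded: "\<bar>if max b k = 0 then 1 else die_prob d p n (max b k - 1) ^ d\<bar> \<le> 1" for k
    using unit by (auto intro: power_le_one)
  show ?case
  proof (cases "b = 0")
    case True
    have "die_prob d p (Suc n) b \<le> measure_pmf.expectation p (\<lambda>k. if k = 0 then 1 else \<rho> ^ (d ^ k))"
      unfolding die_prob.simps True
      by (rule pmf_expectation_mono[where B=1]) (use step unit rho_pow in \<open>auto intro: power_le_one\<close>)
    then show ?thesis using root True by simp
  next
    case False
    have "die_prob d p (Suc n) b \<le> measure_pmf.expectation p (\<lambda>k. \<rho> ^ (d ^ b))"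
      unfolding die_prob.simps
    proof (rule pmf_expectation_mono[where B=1])
      fix k
      have "die_prob d p n (max b k - 1) ^ d \<le> \<rho> ^ (d ^ max b k)" using False by (intro step) auto
      also have "\<dots> \<le> \<rho> ^ (d ^ b)"
        by (rule power_decreasing[OF _ rho]) (use d in \<open>auto intro: power_increasing\<close>)
      finally show "(if max b k = 0 then 1 else die_prob d p n (max b k - 1) ^ d) \<le> \<rho> ^ d ^ b"
        using False by simp
      show "\<bar>\<rho> ^ d ^ b\<bar> \<le> 1" using rho_pow by auto
    qed (rule bounded)
    then show ?thesis by simp
  qed
qed

section \<open>A fixed point below the root extinction probability\<close>

text \<open>Iterating a monotone, sequentially continuous map from 0 gives an increasing
  sequence converging to a fixed point; it stays below any u with f u \<le> u.\<close>
lemma fixpoint_below: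
  fixes f :: "real \<Rightarrow> real"
  assumes u: "0 \<le> u" "f u \<le> u" and f0: "0 \<le> f 0"
    and mono: "\<And>x y. 0 \<le> x \<Longrightarrow> x \<le> y \<Longrightarrow> y \<le> u \<Longrightarrow> f x \<le> f y"
    and cont: "\<And>a L. a \<longlonglongrightarrow> L \<Longrightarrow> (\<And>n. 0 \<le> a n \<and> a n \<le> u) \<Longrightarrow> (\<lambda>n. f (a n)) \<longlonglongrightarrow> f L"
  shows "\<exists>L. 0 \<le> L \<and> L \<le> u \<and> f L = L"
proof -
  define a where "a n = (f ^^ n) 0" for n
  have a_Suc: "a (Suc n) = f (a n)" for n by (simp add: a_def)
  have bounds: "0 \<le> a n \<and> a n \<le> u" for n
  proof (induction n)
    case 0 then show ?case using u by (simp add: a_def)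
  next
    case (Suc n)
    then have "f 0 \<le> f (a n)" "f (a n) \<le> f u" using mono u by auto
    then show ?case using f0 u by (simp add: a_Suc)
  qed
  have "a n \<le> a (Suc n)" for n
  proof (induction n)
    case 0 then show ?case using f0 by (simp add: a_def)
  next
    case (Suc n)
    have "f (a n) \<le> f (a (Suc n))" using Suc bounds by (intro mono) auto
    then show ?case by (simp only: a_Suc)
  qed
  then have lim: "a \<longlonglongrightarrow> (SUP n. a n)"
    using bounds by (intro LIMSEQ_incseq_SUP bdd_aboveI[of _ u] incseq_SucI) auto
  define L where "L = (SUP n. a n)"
  have "(\<lambda>n. a (Suc n)) \<longlonglongrightarrow> L" using LIMSEQ_Suc[OF lim] by (simp add: L_def)
  moreover have "(\<lambda>n. a (Suc n)) \<longlonglongrightarrow> f L"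
    unfolding a_Suc using cont[OF lim bounds] by (simp add: L_def)
  ultimately have "f L = L" by (rule LIMSEQ_unique[symmetric])
  moreover have "0 \<le> L" "L \<le> u"
    using bounds by (auto simp: L_def intro: LIMSEQ_le_const[OF lim] LIMSEQ_le_const2[OF lim])
  ultimately show ?thesis by blast
qed

text \<open>The map whose least fixed point is \<psi> (written with natural exponents).\<close>
definition psi_map :: "nat \<Rightarrow> nat pmf \<Rightarrow> real \<Rightarrow> real" where
  "psi_map d p x = measure_pmf.expectation p (\<lambda>k. if k = 0 then 1 else x ^ (geom_sum d (k - 1) * d))"

text \<open>The bound q b \<ge> q 0 ^ (1 + d + ... + d^b) turns the fixed-point equation of q 0
  into psi_map (q 0) \<le> q 0.\<close>
lemma psi_map_extinct_prob: "psi_map d p (extinct_prob d p 0) \<le> extinct_prob d p 0"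
proof -
  let ?q = "extinct_prob d p"
  have "psi_map d p (?q 0) \<le> measure_pmf.expectation p (\<lambda>k. if k = 0 then 1 else ?q (k - 1) ^ d)"
    unfolding psi_map_def
  proof (rule pmf_expectation_mono[where B=1])
    fix k
    have "?q 0 ^ (geom_sum d (k - 1) * d) = (?q 0 ^ geom_sum d (k - 1)) ^ d" by (simp add: power_mult)
    also have "\<dots> \<le> ?q (k - 1) ^ d"
      by (intro power_mono extinct_prob_geom_sum) (use extinct_prob_01 in auto)
    finally show "(if k = 0 then 1 else ?q 0 ^ (geom_sum d (k - 1) * d)) \<le> (if k = 0 then 1 else ?q (k - 1) ^ d)"
      by simp
    show "\<bar>if k = 0 then 1 else ?q 0 ^ (geom_sum d (k - 1) * d)\<bar> \<le> 1"
      using extinct_prob_01 by (auto intro: power_le_one)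
    show "\<bar>if k = 0 then 1 else ?q (k - 1) ^ d\<bar> \<le> 1"
      using extinct_prob_01 by (auto intro: power_le_one)
  qed
  then show ?thesis using extinct_prob_zero[of d p] by simp
qed

lemma psi_le_extinct_prob:
  assumes psi_min: "\<And>x. 0 \<le> x \<Longrightarrow> psi_map d p x = x \<Longrightarrow> \<psi> \<le> x"
  shows "\<psi> \<le> extinct_prob d p 0"
proof -
  have "\<exists>L. 0 \<le> L \<and> L \<le> extinct_prob d p 0 \<and> psi_map d p L = L"
  proof (rule fixpoint_below)
    show "0 \<le> extinct_prob d p 0" by (rule extinct_prob_01)
    show "psi_map d p (extinct_prob d p 0) \<le> extinct_prob d p 0" by (rule psi_map_extinct_prob)
    show "0 \<le> psi_map d p 0" unfolding psi_map_def
      by (rule Bochner_Integration.integral_nonneg) simp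
    show "psi_map d p x \<le> psi_map d p y" if "0 \<le> x" "x \<le> y" "y \<le> extinct_prob d p 0" for x y
      unfolding psi_map_def using that extinct_prob_01[of d p 0]
      by (intro pmf_expectation_mono[where B=1]) (auto intro: power_le_one power_mono)
    show "(\<lambda>n. psi_map d p (a n)) \<longlonglongrightarrow> psi_map d p L"
      if lim: "a \<longlonglongrightarrow> L" and a: "\<And>n. 0 \<le> a n \<and> a n \<le> extinct_prob d p 0" for a L
      unfolding psi_map_def
    proof (rule pmf_expectation_tendsto[where B=1])
      show "\<bar>if k = 0 then 1 else a n ^ (geom_sum d (k - 1) * d)\<bar> \<le> 1" for n k
        using a[of n] extinct_prob_01[of d p 0] by (auto intro: power_le_one)
      show "(\<lambda>n. if k = 0 then 1 else a n ^ (geom_sum d (k - 1) * d))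
          \<longlonglongrightarrow> (if k = 0 then 1 else L ^ (geom_sum d (k - 1) * d))" for k
        by (cases "k = 0") (auto intro: tendsto_power[OF lim])
    qed
  qed
  then show ?thesis using psi_min by force
qed

section \<open>Bounds on the survival probability\<close>

lemma death_prob_eq:
  "1 - measure (cone_measure d p) (survival d p)
     = measure_pmf.expectation p (\<lambda>k. if k = 0 then 1 else extinct_prob d p (k - 1) ^ Suc d)"
proof -
  have "(\<lambda>n. measure_pmf.expectation p (\<lambda>k. if k = 0 then 1 else die_prob d p n (k - 1) ^ Suc d))
      \<longlonglongrightarrow> measure_pmf.expectation p (\<lambda>k. if k = 0 then 1 else extinct_prob d p (k - 1) ^ Suc d)"
  proof (rule pmf_expectation_tendsto[where B=1])
    show "\<bar>if k = 0 then 1 else die_prob d p n (k - 1) ^ Suc d\<bar> \<le> 1" for n k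
      using die_prob_01[of d p n "k - 1"] by (auto intro: power_le_one simp del: power_Suc)
    show "(\<lambda>n. if k = 0 then 1 else die_prob d p n (k - 1) ^ Suc d)
        \<longlonglongrightarrow> (if k = 0 then 1 else extinct_prob d p (k - 1) ^ Suc d)" for k
      by (cases "k = 0") (auto intro: tendsto_power[OF die_prob_tendsto] simp del: power_Suc)
  qed
  then show ?thesis by (rule LIMSEQ_unique[OF death_prob_limit])
qed

text \<open>Lower bound: q b \<le> \<rho>^(d^b) for every budget b.\<close>
lemma survival_lower_bound:
  assumes d: "1 \<le> d" and rho: "0 \<le> \<rho>" "\<rho> \<le> 1"
    and root: "measure_pmf.expectation p (\<lambda>k. if k = 0 then 1 else \<rho> ^ (d ^ k)) = \<rho>"
  shows "1 - measure_pmf.expectation p (\<lambda>k. if k = 0 then 1 else \<rho> ^ (d ^ (k - 1) * Suc d))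
    \<le> measure (cone_measure d p) (survival d p)"
proof -
  have q_le: "extinct_prob d p b \<le> \<rho> ^ (d ^ b)" for b
    by (rule LIMSEQ_le_const2[OF die_prob_tendsto]) (use die_prob_le_rho[OF d rho root] in auto)
  have "measure_pmf.expectation p (\<lambda>k. if k = 0 then 1 else extinct_prob d p (k - 1) ^ Suc d)
      \<le> measure_pmf.expectation p (\<lambda>k. if k = 0 then 1 else \<rho> ^ (d ^ (k - 1) * Suc d))"
  proof (rule pmf_expectation_mono[where B=1])
    fix k
    have "extinct_prob d p (k - 1) ^ Suc d \<le> (\<rho> ^ (d ^ (k - 1))) ^ Suc d"
      by (intro power_mono q_le) (use extinct_prob_01 in auto)
    then show "(if k = 0 then 1 else extinct_prob d p (k - 1) ^ Suc d)
        \<le> (if k = 0 then 1 else \<rho> ^ (d ^ (k - 1) * Suc d))"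
      by (simp only: power_mult) simp
    show "\<bar>if k = 0 then 1 else extinct_prob d p (k - 1) ^ Suc d\<bar> \<le> 1"
      using extinct_prob_01 by (auto intro: power_le_one simp del: power_Suc)
    show "\<bar>if k = 0 then 1 else \<rho> ^ (d ^ (k - 1) * Suc d)\<bar> \<le> 1"
      using rho by (auto intro: power_le_one simp del: power_Suc)
  qed
  then show ?thesis using death_prob_eq[of d p] by simp
qed

text \<open>Upper bound: q (k-1) \<ge> q 0 ^ (1 + ... + d^(k-1)) \<ge> \<psi> ^ (1 + ... + d^(k-1)).\<close>
lemma survival_upper_bound:
  assumes psi: "0 \<le> \<psi>" "\<psi> \<le> extinct_prob d p 0"
  shows "measure (cone_measure d p) (survival d p)
    \<le> 1 - measure_pmf.expectation p (\<lambda>k. if k = 0 then 1 else \<psi> ^ (geom_sum d (k - 1) * Suc d))"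
proof -
  have psi1: "\<psi> \<le> 1" using psi extinct_prob_01[of d p 0] by simp
  have "measure_pmf.expectation p (\<lambda>k. if k = 0 then 1 else \<psi> ^ (geom_sum d (k - 1) * Suc d))
      \<le> measure_pmf.expectation p (\<lambda>k. if k = 0 then 1 else extinct_prob d p (k - 1) ^ Suc d)"
  proof (rule pmf_expectation_mono[where B=1])
    fix k
    have "\<psi> ^ (geom_sum d (k - 1) * Suc d) = (\<psi> ^ geom_sum d (k - 1)) ^ Suc d" by (rule power_mult)
    also have "\<dots> \<le> (extinct_prob d p 0 ^ geom_sum d (k - 1)) ^ Suc d"
      by (intro power_mono) (use psi in auto)
    also have "\<dots> \<le> extinct_prob d p (k - 1) ^ Suc d"
      by (intro power_mono extinct_prob_geom_sum) (use extinct_prob_01 in auto)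
    finally show "(if k = 0 then 1 else \<psi> ^ (geom_sum d (k - 1) * Suc d))
        \<le> (if k = 0 then 1 else extinct_prob d p (k - 1) ^ Suc d)"
      by simp
    show "\<bar>if k = 0 then 1 else \<psi> ^ (geom_sum d (k - 1) * Suc d)\<bar> \<le> 1"
      using psi psi1 by (auto intro: power_le_one simp del: power_Suc)
    show "\<bar>if k = 0 then 1 else extinct_prob d p (k - 1) ^ Suc d\<bar> \<le> 1"
      using extinct_prob_01 by (auto intro: power_le_one simp del: power_Suc)
  qed
  then show ?thesis using death_prob_eq[of d p] by simp
qed

lemma pw_nat: "0 \<le> x \<Longrightarrow> 0 < n \<Longrightarrow> pw x (real n) = x ^ n"
  by (simp add: pw_def powr_realpow')

text \<open>m/(d-1) * (d^k - 1) = m * (1 + d + ... + d^(k-1)), a natural number.\<close>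
lemma pw_geom_sum:
  assumes d: "2 \<le> d" and x: "0 \<le> x" and m: "0 < m"
  shows "pw x (real m / (real d - 1) * (real d ^ k - 1))
    = (if k = 0 then 1 else x ^ (geom_sum d (k - 1) * m))"
proof (cases k)
  case 0 then show ?thesis by (simp add: pw_def)
next
  case (Suc j)
  have "real d - 1 \<noteq> 0" using d by simp
  have "real m / (real d - 1) * (real d ^ k - 1)
      = real m / (real d - 1) * (real (geom_sum d j) * (real d - 1))"
    using geom_sum_real[of d j] Suc by simp
  also have "\<dots> = real (geom_sum d j * m)" using \<open>real d - 1 \<noteq> 0\<close> by (simp add: field_simps)
  finally have e: "real m / (real d - 1) * (real d ^ k - 1) = real (geom_sum d j * m)" .
  have "0 < geom_sum d j" by (cases j) auto
  then have "pw x (real (geom_sum d j * m)) = x ^ (geom_sum d j * m)" using m by (intro pw_nat[OF x]) simp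
  then show ?thesis unfolding e using Suc by simp
qed

lemma pw_rho:
  assumes d: "1 \<le> d" and x: "0 \<le> x"
  shows "pw x ((real d + 1) / real d * real d ^ k)
    = (if k = 0 then pw x ((real d + 1) / real d) else x ^ (d ^ (k - 1) * Suc d))"
proof (cases k)
  case 0 then show ?thesis by simp
next
  case (Suc j)
  have e: "(real d + 1) / real d * real d ^ k = real (d ^ j * Suc d)"
    using d Suc by (simp add: field_simps)
  have "pw x (real (d ^ j * Suc d)) = x ^ (d ^ j * Suc d)" using d by (intro pw_nat[OF x]) simp
  then show ?thesis unfolding e using Suc by simp
qed

lemma rho_equation_iff:
  assumes "0 \<le> \<rho>" "\<rho> \<le> 1"
  shows "measure_pmf.expectation p (\<lambda>k. if k = 0 then 1 else \<rho> ^ (d ^ k))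
    = measure_pmf.expectation p (\<lambda>k. \<rho> ^ (d ^ k)) + (1 - \<rho>) * pmf p 0"
proof -
  have "measure_pmf.expectation p (\<lambda>k. if k = 0 then 1 else \<rho> ^ (d ^ k))
      = measure_pmf.expectation p (\<lambda>k. if k = 0 then \<rho> else \<rho> ^ (d ^ k)) + (1 - \<rho>) * pmf p 0"
    by (rule pmf_expectation_change_at[where B=1]) (use assms in \<open>auto intro: power_le_one\<close>)
  also have "(\<lambda>k. if k = 0 then \<rho> else \<rho> ^ (d ^ k)) = (\<lambda>k. \<rho> ^ (d ^ k))" by (rule ext) simp
  finally show ?thesis .
qed

lemma lower_bound_expression:
  assumes d: "1 \<le> d" and rho: "0 \<le> \<rho>" "\<rho> \<le> 1"
  shows "1 - (1 - pw \<rho> ((real d + 1) / real d)) * pmf p 0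
           - measure_pmf.expectation p (\<lambda>k. pw \<rho> ((real d + 1) / real d * real d ^ k))
    = 1 - measure_pmf.expectation p (\<lambda>k. if k = 0 then 1 else \<rho> ^ (d ^ (k - 1) * Suc d))"
proof -
  have "measure_pmf.expectation p (\<lambda>k. if k = 0 then 1 else \<rho> ^ (d ^ (k - 1) * Suc d))
      = measure_pmf.expectation p
          (\<lambda>k. if k = 0 then pw \<rho> ((real d + 1) / real d) else \<rho> ^ (d ^ (k - 1) * Suc d))
        + (1 - pw \<rho> ((real d + 1) / real d)) * pmf p 0"
    by (rule pmf_expectation_change_at[where B=1]) (use rho in \<open>auto intro: power_le_one\<close>)
  moreover have "(\<lambda>k. pw \<rho> ((real d + 1) / real d * real d ^ k))
      = (\<lambda>k. if k = 0 then pw \<rho> ((real d + 1) / real d) else \<rho> ^ (d ^ (k - 1) * Suc d))"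
    by (rule ext) (rule pw_rho[OF d rho(1)])
  ultimately show ?thesis by simp
qed

theorem theorem3:
  fixes d :: nat and p :: "nat pmf" and \<rho> \<psi> :: real
  assumes d: "d \<ge> 2"
    and p0: "0 < pmf p 0" "pmf p 0 < 1"
    and rho_nn: "\<rho> \<ge> 0"
    and rho_root: "measure_pmf.expectation p (\<lambda>k. \<rho> ^ (d ^ k)) + (1 - \<rho>) * pmf p 0 = \<rho>"
    and rho_min: "\<And>x. x \<ge> 0 \<Longrightarrow>
        measure_pmf.expectation p (\<lambda>k. x ^ (d ^ k)) + (1 - x) * pmf p 0 = x \<Longrightarrow> \<rho> \<le> x"
    and psi_nn: "\<psi> \<ge> 0"
    and psi_root: "measure_pmf.expectation p
        (\<lambda>k. pw \<psi> (real d / (real d - 1) * (real d ^ k - 1))) = \<psi>"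
    and psi_min: "\<And>x. x \<ge> 0 \<Longrightarrow>
        measure_pmf.expectation p (\<lambda>k. pw x (real d / (real d - 1) * (real d ^ k - 1))) = x
        \<Longrightarrow> \<psi> \<le> x"
  shows "1 - (1 - pw \<rho> ((real d + 1) / real d)) * pmf p 0
           - measure_pmf.expectation p (\<lambda>k. pw \<rho> ((real d + 1) / real d * real d ^ k))
         \<le> measure (cone_measure d p) (survival d p)
       \<and> measure (cone_measure d p) (survival d p)
         \<le> 1 - measure_pmf.expectation p
                 (\<lambda>k. pw \<psi> ((real d + 1) / (real d - 1) * (real d ^ k - 1)))"
proof
  have d1: "1 \<le> d" using d by simp
  have rho1: "\<rho> \<le> 1" by (rule rho_min) simp_all
  have "measure_pmf.expectation p (\<lambda>k. if k = 0 then 1 else \<rho> ^ (d ^ k)) = \<rho>"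
    using rho_root rho_equation_iff[OF rho_nn rho1] by simp
  then show "1 - (1 - pw \<rho> ((real d + 1) / real d)) * pmf p 0
           - measure_pmf.expectation p (\<lambda>k. pw \<rho> ((real d + 1) / real d * real d ^ k))
         \<le> measure (cone_measure d p) (survival d p)"
    unfolding lower_bound_expression[OF d1 rho_nn rho1] by (rule survival_lower_bound[OF d1 rho_nn rho1])
next
  have pw_psi: "pw x (real d / (real d - 1) * (real d ^ k - 1)) = (if k = 0 then 1 else x ^ (geom_sum d (k - 1) * d))"
    if "0 \<le> x" for x k using d that by (intro pw_geom_sum) auto
  have "\<psi> \<le> extinct_prob d p 0"
    by (rule psi_le_extinct_prob) (use psi_min pw_psi in \<open>simp add: psi_map_def\<close>)
  moreover have "pw \<psi> ((real d + 1) / (real d - 1) * (real d ^ k - 1))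
      = (if k = 0 then 1 else \<psi> ^ (geom_sum d (k - 1) * Suc d))" for k
    using pw_geom_sum[OF d psi_nn, of "Suc d" k] by (simp add: add.commute)
  ultimately show "measure (cone_measure d p) (survival d p)
         \<le> 1 - measure_pmf.expectation p (\<lambda>k. pw \<psi> ((real d + 1) / (real d - 1) * (real d ^ k - 1)))"
    using survival_upper_bound[OF psi_nn] by simp
qed

end
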